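(* There are infinitely many connected graphs $G$ with $\omega(G)<\chi(G)$ for which $\overline{\mathrm{scs}}(G)=n-2$, where $n$ is the order of $G$.
   Context: All graphs are finite and simple; $\omega(G)$ is the clique number. For a graph $G=(V,E)$ with $k=\chi(G)$, a proper $k$-colouring is a map $c:V\to[k]$ with $c(u)\neq c(v)$ for every edge $uv$. A set $S\subseteq V$ is a determining set for $(G,c)$ if there is no proper $k$-colouring $c'\neq c$ with $c'(s)=c(s)$ for all $s\in S$; a critical set is an inclusion-minimal determining set. $\mathrm{scs}(G,c)$ is the size of a smallest critical set for $(G,c)$, and $\overline{\mathrm{scs}}(G)$ is the maximum of $\mathrm{scs}(G,c)$ over all proper $\chi(G)$-colourings $c$ of $G$. *)

theory Defs
  imports Main
begin

definition simple_graph :: "nat \<Rightarrow> (nat \<Rightarrow> nat \<Rightarrow> bool) \<Rightarrow> bool" where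
  "simple_graph n E \<longleftrightarrow> (\<forall>u v. E u v \<longrightarrow> u < n \<and> v < n \<and> u \<noteq> v \<and> E v u)"

definition connected_graph :: "nat \<Rightarrow> (nat \<Rightarrow> nat \<Rightarrow> bool) \<Rightarrow> bool" where
  "connected_graph n E \<longleftrightarrow> 0 < n \<and> (\<forall>u<n. \<forall>v<n. E\<^sup>*\<^sup>* u v)"

definition is_clique :: "nat \<Rightarrow> (nat \<Rightarrow> nat \<Rightarrow> bool) \<Rightarrow> nat set \<Rightarrow> bool" where
  "is_clique n E K \<longleftrightarrow> K \<subseteq> {0..<n} \<and> (\<forall>u\<in>K. \<forall>v\<in>K. u \<noteq> v \<longrightarrow> E u v)"

definition clique_number :: "nat \<Rightarrow> (nat \<Rightarrow> nat \<Rightarrow> bool) \<Rightarrow> nat" where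
  "clique_number n E = Max {card K | K. is_clique n E K}"

text \<open>A proper k-colouring c : V \<rightarrow> [k] = {1..k}. Only the values on vertices matter.\<close>
definition proper_colouring :: "nat \<Rightarrow> (nat \<Rightarrow> nat \<Rightarrow> bool) \<Rightarrow> nat \<Rightarrow> (nat \<Rightarrow> nat) \<Rightarrow> bool" where
  "proper_colouring n E k c \<longleftrightarrow> (\<forall>v<n. c v \<in> {1..k}) \<and> (\<forall>u v. E u v \<longrightarrow> c u \<noteq> c v)"

definition chromatic_number :: "nat \<Rightarrow> (nat \<Rightarrow> nat \<Rightarrow> bool) \<Rightarrow> nat" where
  "chromatic_number n E = (LEAST k. \<exists>c. proper_colouring n E k c)"

definition determining_set :: "nat \<Rightarrow> (nat \<Rightarrow> nat \<Rightarrow> bool) \<Rightarrow> (nat \<Rightarrow> nat) \<Rightarrow> nat set \<Rightarrow> bool" where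
  "determining_set n E c S \<longleftrightarrow> S \<subseteq> {0..<n} \<and>
     \<not> (\<exists>c'. proper_colouring n E (chromatic_number n E) c' \<and> (\<exists>v<n. c' v \<noteq> c v)
            \<and> (\<forall>s\<in>S. c' s = c s))"

definition critical_set :: "nat \<Rightarrow> (nat \<Rightarrow> nat \<Rightarrow> bool) \<Rightarrow> (nat \<Rightarrow> nat) \<Rightarrow> nat set \<Rightarrow> bool" where
  "critical_set n E c S \<longleftrightarrow> determining_set n E c S \<and> (\<forall>T. T \<subset> S \<longrightarrow> \<not> determining_set n E c T)"

definition scs :: "nat \<Rightarrow> (nat \<Rightarrow> nat \<Rightarrow> bool) \<Rightarrow> (nat \<Rightarrow> nat) \<Rightarrow> nat" where
  "scs n E c = Min {card S | S. critical_set n E c S}"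

definition scs_bar :: "nat \<Rightarrow> (nat \<Rightarrow> nat \<Rightarrow> bool) \<Rightarrow> nat" where
  "scs_bar n E = Max {scs n E c | c. proper_colouring n E (chromatic_number n E) c}"

end

theory Submission
  imports Defs
begin

text \<open>The witnesses are the 5-cycle 0, ..., 4 with the vertices 5, ..., n - 1 all pendant at
  vertex 0; this graph is connected, triangle-free and 3-chromatic. In a proper colouring with
  k colours, a vertex whose neighbours outside a set R carry all k - 1 other colours is forced by
  the colours outside R. Every proper 3-colouring of the 5-cycle has two vertices at distance two
  that both see two colours on the cycle, so the other n - 2 vertices determine the colouring and
  scs is at most n - 2. For the colouring giving 0 colour 3, vertices 2 and 4 colour 2 and all
  others colour 1, each pendant vertex, vertex 2 and vertex 3 can be recoloured alone and
  vertices 0 and 4 together, so every determining set has at least n - 2 elements.\<close>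

lemma connected_graphI:
  assumes "simple_graph n E" and "r < n" and "\<And>v. v < n \<Longrightarrow> E\<^sup>*\<^sup>* r v"
  shows "connected_graph n E"
proof -
  have "symp E\<^sup>*\<^sup>*"
    using assms(1) by (intro symp_rtranclp) (auto simp: simple_graph_def symp_def)
  then have "E\<^sup>*\<^sup>* u v" if "u < n" "v < n" for u v
    using assms(3) that by (meson rtranclp_trans sympD)
  then show ?thesis
    using assms(2) unfolding connected_graph_def by auto
qed

lemma clique_number_eq_2:
  assumes "simple_graph n E" "E u v"
    and triangle_free: "\<And>x y z. E x y \<Longrightarrow> E y z \<Longrightarrow> E x z \<Longrightarrow> False"
  shows "clique_number n E = 2"
proof -
  have card_le: "card K \<le> 2" if "is_clique n E K" for K
  proof (rule ccontr)
    assume "\<not> card K \<le> 2"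
    then obtain T where "T \<subseteq> K" "card T = 3"
      using obtain_subset_with_card_n[of 3 K] by force
    then obtain x y z where "{x, y, z} \<subseteq> K" "x \<noteq> y" "y \<noteq> z" "x \<noteq> z"
      unfolding card_3_iff by blast
    then have "E x y" "E y z" "E x z"
      using that unfolding is_clique_def by auto
    then show False
      by (rule triangle_free)
  qed
  have "is_clique n E {u, v}"
    using assms unfolding simple_graph_def is_clique_def by auto
  moreover have "u \<noteq> v"
    using assms unfolding simple_graph_def by auto
  ultimately have "2 \<in> {card K | K. is_clique n E K}"
    by force
  moreover have "finite {card K | K. is_clique n E K}"
    by (rule finite_subset[of _ "{..2}"]) (use card_le in auto)
  ultimately show ?thesis
    unfolding clique_number_def using card_le by (intro Max_eqI) auto
qed

lemma determining_set_vertices: "determining_set n E c {0..<n}"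
  unfolding determining_set_def by (auto simp: Bex_def)

lemma determining_set_recolouring:
  assumes "determining_set n E c S"
    and "proper_colouring n E (chromatic_number n E) c'" "v < n" "c' v \<noteq> c v"
  shows "\<exists>s\<in>S. c' s \<noteq> c s"
  using assms unfolding determining_set_def by blast

lemma determining_set_recolour_vertex:
  assumes "determining_set n E c S"
    and "proper_colouring n E (chromatic_number n E) (c(v := x))" "v < n" "x \<noteq> c v"
  shows "v \<in> S"
  using determining_set_recolouring[OF assms(1,2,3)] assms(4) by (metis fun_upd_other fun_upd_same)

lemma determining_set_Diff:
  assumes forced: "\<And>v. v \<in> R \<Longrightarrow> v < n \<Longrightarrow>
      {1..chromatic_number n E} - {c v} \<subseteq> c ` {u. u < n \<and> u \<notin> R \<and> E v u}"
  shows "determining_set n E c ({0..<n} - R)"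
proof -
  have "c' v = c v"
    if c': "proper_colouring n E (chromatic_number n E) c'"
      and agree: "\<forall>s \<in> {0..<n} - R. c' s = c s" and "v < n" for c' v
  proof (rule ccontr)
    assume "c' v \<noteq> c v"
    with agree \<open>v < n\<close> have "v \<in> R"
      by auto
    have "c' v \<in> {1..chromatic_number n E}"
      using c' \<open>v < n\<close> unfolding proper_colouring_def by blast
    with \<open>c' v \<noteq> c v\<close> forced[OF \<open>v \<in> R\<close> \<open>v < n\<close>]
    obtain u where "u < n" "u \<notin> R" "E v u" "c' v = c u"
      by blast
    moreover from this agree have "c' u = c u"
      by auto
    moreover from \<open>E v u\<close> c' have "c' v \<noteq> c' u"
      unfolding proper_colouring_def by blast
    ultimately show False
      by simp
  qed
  then show ?thesis
    unfolding determining_set_def by blast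
qed

lemma determining_set_Diff_three_colours:
  assumes chi: "chromatic_number n E = 3" and c: "proper_colouring n E 3 c"
    and two_colours: "\<And>v. v \<in> R \<Longrightarrow> v < n \<Longrightarrow>
      \<exists>p q. p < n \<and> q < n \<and> p \<notin> R \<and> q \<notin> R \<and> E v p \<and> E v q \<and> c p \<noteq> c q"
  shows "determining_set n E c ({0..<n} - R)"
proof (rule determining_set_Diff)
  fix v
  assume "v \<in> R" "v < n"
  then obtain p q where pq: "p < n" "q < n" "p \<notin> R" "q \<notin> R" "E v p" "E v q" "c p \<noteq> c q"
    using two_colours by blast
  with \<open>v < n\<close> c
  have "c v \<in> {1..3}" "c p \<in> {1..3}" "c q \<in> {1..3}" "c v \<noteq> c p" "c v \<noteq> c q"
    unfolding proper_colouring_def by auto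
  with pq(7) have "{1..3} - {c v} \<subseteq> {c p, c q}"
    by auto
  with pq(1-6) chi
  show "{1..chromatic_number n E} - {c v} \<subseteq> c ` {u. u < n \<and> u \<notin> R \<and> E v u}"
    by auto
qed

lemma critical_subset_exists:
  assumes "determining_set n E c D"
  shows "\<exists>S \<subseteq> D. critical_set n E c S"
proof -
  have "D \<subseteq> {0..<n}"
    using assms unfolding determining_set_def by blast
  then have "finite D"
    by (rule finite_subset) simp
  then show ?thesis
    using assms
  proof (induction rule: finite_psubset_induct)
    case (psubset D)
    show ?case
    proof (cases "critical_set n E c D")
      case True
      then show ?thesis
        by blast
    next
      case False
      with psubset.prems obtain T where "T \<subset> D" "determining_set n E c T"
        unfolding critical_set_def by blast
      with psubset.IH obtain S where "S \<subseteq> T" "critical_set n E c S"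
        by blast
      with \<open>T \<subset> D\<close> show ?thesis
        by blast
    qed
  qed
qed

lemma finite_card_critical_sets: "finite {card S | S. critical_set n E c S}"
proof (rule finite_subset[of _ "{..n}"])
  have "card S \<le> n" if "critical_set n E c S" for S
  proof -
    have "S \<subseteq> {0..<n}"
      using that unfolding critical_set_def determining_set_def by blast
    then have "card S \<le> card {0..<n}"
      by (intro card_mono) simp_all
    then show ?thesis
      by simp
  qed
  then show "{card S | S. critical_set n E c S} \<subseteq> {..n}"
    by auto
qed simp

lemma scs_le_card: "critical_set n E c S \<Longrightarrow> scs n E c \<le> card S"
  unfolding scs_def using finite_card_critical_sets by (intro Min_le) auto

lemma scs_le_card_determining:
  assumes "determining_set n E c D"
  shows "scs n E c \<le> card D"
proof -
  obtain S where "S \<subseteq> D" "critical_set n E c S"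
    using critical_subset_exists[OF assms] by blast
  moreover have "finite D"
    using assms unfolding determining_set_def by (auto intro: finite_subset)
  ultimately show ?thesis
    using scs_le_card card_mono le_trans by metis
qed

lemma scs_eq_card_critical: "\<exists>S. critical_set n E c S \<and> scs n E c = card S"
proof -
  obtain S where "critical_set n E c S"
    using critical_subset_exists[OF determining_set_vertices] by blast
  then have "scs n E c \<in> {card S | S. critical_set n E c S}"
    unfolding scs_def using finite_card_critical_sets by (intro Min_in) auto
  then show ?thesis
    by auto
qed

lemma scs_bar_eqI:
  assumes "proper_colouring n E (chromatic_number n E) c" "scs n E c = m"
    and "\<And>c. proper_colouring n E (chromatic_number n E) c \<Longrightarrow> scs n E c \<le> m"
  shows "scs_bar n E = m"
  unfolding scs_bar_def
proof (rule Max_eqI)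
  show "finite {scs n E c | c. proper_colouring n E (chromatic_number n E) c}"
    by (rule finite_subset[of _ "{..m}"]) (use assms(3) in auto)
qed (use assms in auto)

lemma ex_less_5: "(\<exists>i<5. P (i::nat)) \<longleftrightarrow> P 0 \<or> P 1 \<or> P 2 \<or> P 3 \<or> P 4"
  by (auto simp: numeral_eq_Suc less_Suc_eq)

lemma C5_adjacent_colours_differ:
  fixes c :: "nat \<Rightarrow> nat"
  assumes "\<And>i. i < 5 \<Longrightarrow> c i \<noteq> c ((i + 1) mod 5)"
  shows "c 0 \<noteq> c 1" "c 1 \<noteq> c 2" "c 2 \<noteq> c 3" "c 3 \<noteq> c 4" "c 4 \<noteq> c 0"
  using assms[of 0] assms[of 1] assms[of 2] assms[of 3] assms[of 4]
  by (simp_all del: One_nat_def)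

text \<open>Up to rotation and renaming, a proper 3-colouring of the 5-cycle is a, b, a, b, c:
  the vertex coloured c and its two neighbours see two colours, and two of them are at
  distance two.\<close>
lemma C5_three_colouring_bichromatic_neighbourhoods:
  fixes c :: "nat \<Rightarrow> nat"
  assumes "\<And>i. i < 5 \<Longrightarrow> c i \<in> {1..3}" and "\<And>i. i < 5 \<Longrightarrow> c i \<noteq> c ((i + 1) mod 5)"
  shows "\<exists>i<5. c ((i + 4) mod 5) \<noteq> c ((i + 1) mod 5) \<and>
    c ((i + 1) mod 5) \<noteq> c ((i + 3) mod 5)"
proof -
  have "c 0 \<in> {1..3}" "c 1 \<in> {1..3}" "c 2 \<in> {1..3}" "c 3 \<in> {1..3}" "c 4 \<in> {1..3}"
    using assms(1) by simp_all
  moreover note C5_adjacent_colours_differ[of c, OF assms(2)]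
  ultimately show ?thesis
    unfolding ex_less_5 by (auto simp del: One_nat_def)
qed

lemma C5_colouring_needs_three_colours:
  fixes c :: "nat \<Rightarrow> nat"
  assumes "\<And>i. i < 5 \<Longrightarrow> c i \<in> {1..k}" and "\<And>i. i < 5 \<Longrightarrow> c i \<noteq> c ((i + 1) mod 5)"
  shows "3 \<le> k"
proof (rule ccontr)
  assume "\<not> 3 \<le> k"
  then have "c i \<in> {1, 2}" if "i < 5" for i
    using assms(1)[OF that] by auto
  then have "c 0 \<in> {1, 2}" "c 1 \<in> {1, 2}" "c 2 \<in> {1, 2}" "c 3 \<in> {1, 2}" "c 4 \<in> {1, 2}"
    by simp_all
  moreover note C5_adjacent_colours_differ[of c, OF assms(2)]
  ultimately show False
    by auto
qed

definition pendant_C5 :: "nat \<Rightarrow> nat \<Rightarrow> nat \<Rightarrow> bool" where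
  "pendant_C5 n u v \<longleftrightarrow>
     (u < 5 \<and> v < 5 \<and> (u + 1 = v \<or> v + 1 = u \<or> {u, v} = {0, 4})) \<or>
     (u = 0 \<and> 5 \<le> v \<and> v < n) \<or> (v = 0 \<and> 5 \<le> u \<and> u < n)"

lemma simple_graph_pendant_C5: "5 \<le> n \<Longrightarrow> simple_graph n (pendant_C5 n)"
  unfolding simple_graph_def pendant_C5_def by (auto simp: doubleton_eq_iff)

lemma pendant_C5_triangle_free:
  "pendant_C5 n x y \<Longrightarrow> pendant_C5 n y z \<Longrightarrow> pendant_C5 n x z \<Longrightarrow> False"
  unfolding pendant_C5_def by (auto simp: doubleton_eq_iff)

lemma pendant_C5_cycle_edge:
  assumes "i < 5"
  shows "pendant_C5 n i ((i + 1) mod 5)"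
proof -
  have "i \<in> {0, 1, 2, 3, 4}"
    using assms by auto
  then show ?thesis
    unfolding pendant_C5_def by auto
qed

lemma proper_colouring_pendant_C5_cycle:
  assumes "5 \<le> n" "proper_colouring n (pendant_C5 n) k c" "i < 5"
  shows "c i \<in> {1..k}" "c i \<noteq> c ((i + 1) mod 5)"
  using assms pendant_C5_cycle_edge[OF assms(3)] unfolding proper_colouring_def by auto

lemma pendant_C5_reachable:
  assumes "v < n"
  shows "(pendant_C5 n)\<^sup>*\<^sup>* 0 v"
proof (cases "v < 5")
  case True
  then show ?thesis
  proof (induction v)
    case (Suc v)
    then have "pendant_C5 n v (Suc v)"
      unfolding pendant_C5_def by simp
    with Suc show ?case
      by (meson Suc_lessD rtranclp.rtrancl_into_rtrancl)
  qed simp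
next
  case False
  then have "pendant_C5 n 0 v"
    using assms unfolding pendant_C5_def by simp
  then show ?thesis
    by blast
qed

lemma connected_graph_pendant_C5: "5 \<le> n \<Longrightarrow> connected_graph n (pendant_C5 n)"
  by (rule connected_graphI[OF simple_graph_pendant_C5, of n 0]) (auto intro: pendant_C5_reachable)

lemma clique_number_pendant_C5:
  assumes "5 \<le> n"
  shows "clique_number n (pendant_C5 n) = 2"
proof (rule clique_number_eq_2[OF simple_graph_pendant_C5[OF assms]])
  show "pendant_C5 n 0 1"
    unfolding pendant_C5_def by simp
qed (use pendant_C5_triangle_free in blast)

definition pendant_C5_colouring :: "nat \<Rightarrow> nat" where
  "pendant_C5_colouring v = (if v = 0 then 3 else if v = 2 \<or> v = 4 then 2 else 1)"

lemma proper_colouring_pendant_C5_colouring: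
  "5 \<le> n \<Longrightarrow> proper_colouring n (pendant_C5 n) 3 pendant_C5_colouring"
  unfolding proper_colouring_def pendant_C5_def pendant_C5_colouring_def
  by (auto simp: doubleton_eq_iff)

lemma chromatic_number_pendant_C5:
  assumes "5 \<le> n"
  shows "chromatic_number n (pendant_C5 n) = 3"
  unfolding chromatic_number_def
proof (rule Least_equality)
  show "\<exists>c. proper_colouring n (pendant_C5 n) 3 c"
    using proper_colouring_pendant_C5_colouring[OF assms] by blast
next
  fix k
  assume "\<exists>c. proper_colouring n (pendant_C5 n) k c"
  then obtain c where c: "proper_colouring n (pendant_C5 n) k c"
    by blast
  show "3 \<le> k"
    by (rule C5_colouring_needs_three_colours[of c])
      (use proper_colouring_pendant_C5_cycle[OF assms c] in auto)
qed

lemma determining_set_pendant_C5: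
  assumes n: "5 \<le> n" and c: "proper_colouring n (pendant_C5 n) 3 c"
  obtains R where "R \<subseteq> {0..<n}" "card R = 2" "determining_set n (pendant_C5 n) c ({0..<n} - R)"
proof -
  obtain i where i: "i < 5" "c ((i + 4) mod 5) \<noteq> c ((i + 1) mod 5)"
    "c ((i + 1) mod 5) \<noteq> c ((i + 3) mod 5)"
    using C5_three_colouring_bichromatic_neighbourhoods proper_colouring_pendant_C5_cycle[OF n c]
    by blast
  have i5: "i \<in> {0, 1, 2, 3, 4}"
    using i(1) by auto
  define R where "R = {i, (i + 2) mod 5}"
  have "\<exists>p q. p < n \<and> q < n \<and> p \<notin> R \<and> q \<notin> R \<and>
      pendant_C5 n v p \<and> pendant_C5 n v q \<and> c p \<noteq> c q" if "v \<in> R" for v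
  proof -
    consider "v = i" | "v = (i + 2) mod 5"
      using \<open>v \<in> R\<close> unfolding R_def by blast
    then show ?thesis
    proof cases
      case 1
      show ?thesis
        using n i5 i(2) 1 unfolding R_def pendant_C5_def
        by (intro exI[of _ "(i + 4) mod 5"] exI[of _ "(i + 1) mod 5"]) auto
    next
      case 2
      show ?thesis
        using n i5 i(3) 2 unfolding R_def pendant_C5_def
        by (intro exI[of _ "(i + 1) mod 5"] exI[of _ "(i + 3) mod 5"]) auto
    qed
  qed
  then have "determining_set n (pendant_C5 n) c ({0..<n} - R)"
    using determining_set_Diff_three_colours[OF chromatic_number_pendant_C5[OF n] c] by blast
  moreover have "R \<subseteq> {0..<n}"
    using i(1) n unfolding R_def by auto
  moreover have "card R = 2"
    using i5 unfolding R_def by auto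
  ultimately show ?thesis
    using that by blast
qed

lemma scs_pendant_C5_le:
  assumes n: "5 \<le> n" and c: "proper_colouring n (pendant_C5 n) 3 c"
  shows "scs n (pendant_C5 n) c \<le> n - 2"
proof -
  obtain R where R: "R \<subseteq> {0..<n}" "card R = 2"
    and det: "determining_set n (pendant_C5 n) c ({0..<n} - R)"
    using determining_set_pendant_C5[OF n c] .
  have "card ({0..<n} - R) = n - 2"
    using R by (simp add: card_Diff_subset finite_subset)
  then show ?thesis
    using scs_le_card_determining[OF det] by simp
qed

lemma card_determining_set_pendant_C5:
  assumes n: "5 \<le> n" and S: "determining_set n (pendant_C5 n) pendant_C5_colouring S"
  shows "n - 2 \<le> card S"
proof -
  let ?E = "pendant_C5 n" and ?c = pendant_C5_colouring
  have chi: "chromatic_number n ?E = 3"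
    using chromatic_number_pendant_C5[OF n] .
  have recolour: "v \<in> S" if "proper_colouring n ?E 3 (?c(v := x))" "v < n" "x \<noteq> ?c v" for v x
    using determining_set_recolour_vertex[OF S] that chi by simp
  have "{5..<n} \<subseteq> S"
  proof
    fix v
    assume "v \<in> {5..<n}"
    then show "v \<in> S"
      by (intro recolour[of v 2])
        (auto simp: proper_colouring_def pendant_C5_def pendant_C5_colouring_def doubleton_eq_iff)
  qed
  moreover have "2 \<in> S" "3 \<in> S"
    using n by (intro recolour[of _ 3];
        auto simp: proper_colouring_def pendant_C5_def pendant_C5_colouring_def doubleton_eq_iff)+
  moreover obtain x where "x \<in> {0, 4}" "x \<in> S"
  proof -
    let ?c' = "?c(0 := 2, 4 := 3)"
    have "proper_colouring n ?E 3 ?c'"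
      using n
      by (auto simp: proper_colouring_def pendant_C5_def pendant_C5_colouring_def doubleton_eq_iff)
    then obtain s where "s \<in> S" "?c' s \<noteq> ?c s"
      using determining_set_recolouring[OF S, of ?c' 0] n chi
      by (auto simp: pendant_C5_colouring_def)
    then show ?thesis
      using that by (auto split: if_splits)
  qed
  ultimately have sub: "{5..<n} \<union> {2, 3, x} \<subseteq> S"
    by auto
  have "finite S"
    using S unfolding determining_set_def by (auto intro: finite_subset)
  moreover have "card ({5..<n} \<union> {2, 3, x}) = n - 2"
    using n \<open>x \<in> {0, 4}\<close> by (subst card_Un_disjoint) auto
  ultimately show ?thesis
    using card_mono[OF _ sub] by simp
qed

lemma scs_pendant_C5_colouring:
  assumes "5 \<le> n"
  shows "scs n (pendant_C5 n) pendant_C5_colouring = n - 2"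
proof -
  obtain S where "critical_set n (pendant_C5 n) pendant_C5_colouring S"
    "scs n (pendant_C5 n) pendant_C5_colouring = card S"
    using scs_eq_card_critical by blast
  then have "n - 2 \<le> scs n (pendant_C5 n) pendant_C5_colouring"
    using card_determining_set_pendant_C5[OF assms] unfolding critical_set_def by simp
  moreover have "scs n (pendant_C5 n) pendant_C5_colouring \<le> n - 2"
    using scs_pendant_C5_le[OF assms proper_colouring_pendant_C5_colouring[OF assms]] .
  ultimately show ?thesis
    by simp
qed

lemma scs_bar_pendant_C5: "5 \<le> n \<Longrightarrow> scs_bar n (pendant_C5 n) = n - 2"
  by (rule scs_bar_eqI[OF _ scs_pendant_C5_colouring])
    (simp_all add: chromatic_number_pendant_C5 proper_colouring_pendant_C5_colouring scs_pendant_C5_le)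

theorem proposition1:
  shows "\<forall>N::nat. \<exists>n E. N \<le> n \<and> simple_graph n E \<and> connected_graph n E \<and>
           clique_number n E < chromatic_number n E \<and> scs_bar n E = n - 2"
proof
  fix N :: nat
  have n: "5 \<le> N + 5"
    by simp
  show "\<exists>n E. N \<le> n \<and> simple_graph n E \<and> connected_graph n E \<and>
           clique_number n E < chromatic_number n E \<and> scs_bar n E = n - 2"
    using simple_graph_pendant_C5[OF n] connected_graph_pendant_C5[OF n]
      clique_number_pendant_C5[OF n] chromatic_number_pendant_C5[OF n] scs_bar_pendant_C5[OF n]
    by (intro exI[of _ "N + 5"] exI[of _ "pendant_C5 (N + 5)"]) simp
qed

end
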